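(* Let $n\ge 3$ and let $x_1,x_2,x_3,x_4$ be distinct vertices of $H_2(n,n-1)$ such that $x_1\sim x_2$, $x_2\sim x_3$, $x_3\sim x_4$ and $x_4\sim x_1$. Then $x_1+x_2=x_3+x_4$ and $x_1+x_4=x_2+x_3$.
   Context: $H_2(n,n-1)$ is the simple undirected graph with vertex set $\mathbb{Z}_2^n$ in which $x\sim y$ (adjacent) iff their Hamming distance $|\{i:x_i\ne y_i\}|$ is at least $n-1$. Addition is in $\mathbb{Z}_2^n$. *)

theory Defs
  imports Main
begin

text \<open>Vertices of H_2(n,n-1): elements of Z_2^n, represented as boolean lists of length n
  (True = 1, False = 0).\<close>

definition Z2n :: "nat \<Rightarrow> bool list set" where
  "Z2n n = {x. length x = n}"

definition vadd :: "bool list \<Rightarrow> bool list \<Rightarrow> bool list" where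
  "vadd x y = map2 (\<noteq>) x y"

definition hamming :: "bool list \<Rightarrow> bool list \<Rightarrow> nat" where
  "hamming x y = card {i. i < length x \<and> x ! i \<noteq> y ! i}"

text \<open>Adjacency in H_2(n,n-1) (simple graph, so distinct vertices).\<close>
definition H_adj :: "nat \<Rightarrow> bool list \<Rightarrow> bool list \<Rightarrow> bool" where
  "H_adj n x y \<longleftrightarrow> x \<in> Z2n n \<and> y \<in> Z2n n \<and> x \<noteq> y \<and> hamming x y \<ge> n - 1"

end

theory Submission
  imports Defs
begin

text \<open>Adjacent vertices of \<open>H_2(n,n-1)\<close> agree in at most one coordinate. If the four bits of a
  4-cycle at some coordinate had odd sum, some vertex would agree there with both of its
  neighbours; but these neighbours, being distinct, differ at a second coordinate, where the vertex
  agrees with one of them, so that this edge has two agreements. Hence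
  \<open>x\<^sub>1 + x\<^sub>2 + x\<^sub>3 + x\<^sub>4 = 0\<close>, which is equivalent to
  both identities.\<close>

lemma H_adj_length:
  assumes "H_adj n x y"
  shows "length x = n" "length y = n"
  using assms by (simp_all add: H_adj_def Z2n_def)

lemma H_adj_sym:
  assumes "H_adj n x y"
  shows "H_adj n y x"
proof -
  have "{i. i < length y \<and> y ! i \<noteq> x ! i} = {i. i < length x \<and> x ! i \<noteq> y ! i}"
    using H_adj_length[OF assms] by auto
  then show ?thesis
    using assms by (auto simp: H_adj_def hamming_def)
qed

lemma H_adj_agree_at_most_once:
  assumes "H_adj n x y" "m < n" "m' < n" "x ! m = y ! m" "x ! m' = y ! m'"
  shows "m = m'"
proof (rule ccontr)
  assume "m \<noteq> m'"
  have "{i. i < length x \<and> x ! i \<noteq> y ! i} \<subseteq> {..<n} - {m, m'}"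
    using assms H_adj_length[OF assms(1)] by auto
  then have "hamming x y \<le> card ({..<n} - {m, m'})"
    unfolding hamming_def by (rule card_mono[rotated]) simp
  also have "\<dots> = n - 2"
    using assms \<open>m \<noteq> m'\<close> by (simp add: card_Diff_subset)
  finally have "hamming x y \<le> n - 2" .
  moreover have "hamming x y \<ge> n - 1"
    using assms(1) by (simp add: H_adj_def)
  ultimately show False
    using assms \<open>m \<noteq> m'\<close> by linarith
qed

lemma H_adj_not_agree_with_both_neighbours:
  assumes xy: "H_adj n x y" and xz: "H_adj n x z" and "y \<noteq> z" and "m < n"
    and "x ! m = y ! m" "x ! m = z ! m"
  shows False
proof -
  obtain a where a: "a < n" "y ! a \<noteq> z ! a"
    using \<open>y \<noteq> z\<close> H_adj_length[OF xy] H_adj_length[OF xz] by (auto simp: list_eq_iff_nth_eq)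
  then have "a \<noteq> m"
    using assms by auto
  moreover have "x ! a = y ! a \<or> x ! a = z ! a"
    using a by auto
  ultimately show False
    using H_adj_agree_at_most_once[OF xy \<open>m < n\<close> \<open>a < n\<close>]
      H_adj_agree_at_most_once[OF xz \<open>m < n\<close> \<open>a < n\<close>] assms a by blast
qed

lemma odd_bit_sum_cases:
  fixes a b c d :: bool
  assumes "(a \<noteq> b) \<noteq> (c \<noteq> d)"
  obtains "b = a" "b = c" | "c = b" "c = d" | "d = c" "d = a" | "a = d" "a = b"
  using assms by auto

lemma vadd_eq_vadd_iff:
  assumes "length a = n" "length b = n" "length c = n" "length d = n"
  shows "vadd a b = vadd c d \<longleftrightarrow> (\<forall>m<n. (a ! m \<noteq> b ! m) = (c ! m \<noteq> d ! m))"
  using assms by (auto simp: vadd_def list_eq_iff_nth_eq)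

theorem lemma5p4:
  fixes n :: nat and x1 x2 x3 x4 :: "bool list"
  assumes "n \<ge> 3"
    and "x1 \<in> Z2n n" "x2 \<in> Z2n n" "x3 \<in> Z2n n" "x4 \<in> Z2n n"
    and "distinct [x1, x2, x3, x4]"
    and "H_adj n x1 x2" "H_adj n x2 x3" "H_adj n x3 x4" "H_adj n x4 x1"
  shows "vadd x1 x2 = vadd x3 x4 \<and> vadd x1 x4 = vadd x2 x3"
proof -
  have e12: "H_adj n x2 x1" and e41: "H_adj n x1 x4"
    using assms(7,10) by (simp_all add: H_adj_sym)
  have e32: "H_adj n x3 x2" and e43: "H_adj n x4 x3"
    using assms(8,9) by (simp_all add: H_adj_sym)
  have "x1 \<noteq> x3" "x3 \<noteq> x1" "x2 \<noteq> x4" "x4 \<noteq> x2"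
    using assms(6) by auto
  have even_bit_sum: "(x1 ! m \<noteq> x2 ! m) = (x3 ! m \<noteq> x4 ! m)" if "m < n" for m
  proof (rule ccontr)
    assume "(x1 ! m \<noteq> x2 ! m) \<noteq> (x3 ! m \<noteq> x4 ! m)"
    then show False
    proof (cases rule: odd_bit_sum_cases)
      case 1 then show False
        using H_adj_not_agree_with_both_neighbours[OF e12 assms(8) \<open>x1 \<noteq> x3\<close> \<open>m < n\<close>] by simp
    next
      case 2 then show False
        using H_adj_not_agree_with_both_neighbours[OF e32 assms(9) \<open>x2 \<noteq> x4\<close> \<open>m < n\<close>] by simp
    next
      case 3 then show False
        using H_adj_not_agree_with_both_neighbours[OF e43 assms(10) \<open>x3 \<noteq> x1\<close> \<open>m < n\<close>] by simp
    next
      case 4 then show False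
        using H_adj_not_agree_with_both_neighbours[OF e41 assms(7) \<open>x4 \<noteq> x2\<close> \<open>m < n\<close>] by simp
    qed
  qed
  have "length x1 = n" "length x2 = n" "length x3 = n" "length x4 = n"
    using assms(2-5) by (simp_all add: Z2n_def)
  then show ?thesis
    using even_bit_sum by (auto simp: vadd_eq_vadd_iff)
qed

end
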